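(* Let $\mathbf{S}$ be any one of the four systems $\mathbf{G3N}$, $\mathbf{G3NeF}$, $\mathbf{G3CoPC}$, $\mathbf{G3MPC}$. Let $\Gamma,\Delta$ be finite multisets of formulas and $\varphi$ a formula such that the common language of $\Gamma$ and $\Delta,\varphi$ is non-empty. If $\Gamma,\Delta\Rightarrow\varphi$ is derivable in $\mathbf{S}$, then there exists a formula $\sigma$ such that (1) every propositional variable occurring in $\sigma$ belongs to the common language of $\Gamma$ and $\Delta,\varphi$, and (2) both $\Gamma\Rightarrow\sigma$ and $\Delta,\sigma\Rightarrow\varphi$ are derivable in $\mathbf{S}$.
   Context: Formulas are generated from a countable set of propositional variables $p,q,\dots$ and the constant $\top$ by the grammar $\varphi::= p\mid\top\mid\varphi\wedge\varphi\mid\varphi\vee\varphi\mid\varphi\to\varphi\mid\neg\varphi$ (there is no constant $\bot$). $\varphi\leftrightarrow\psi$ abbreviates $(\varphi\to\psi)\wedge(\psi\to\varphi)$. A sequent is an expression $\Gamma\Rightarrow\varphi$ where $\Gamma$ is a finite multiset of formulas and $\varphi$ is a formula (the goal); $\Gamma,\Delta$ denotes multiset union and $\Gamma,\alpha$ denotes $\Gamma$ with one more occurrence of $\alpha$. Rules ($p$ a propositional variable): (ax) $\Gamma,p\Rightarrow p$ (no premises); ($\top$) $\Gamma\Rightarrow\top$ (no premises); ($\to$r) from $\Gamma,\alpha\Rightarrow\beta$ infer $\Gamma\Rightarrow\alpha\to\beta$; ($\to$l) from $\Gamma,\alpha\to\beta\Rightarrow\alpha$ and $\Gamma,\beta\Rightarrow\varphi$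 infer $\Gamma,\alpha\to\beta\Rightarrow\varphi$; ($\wedge$r) from $\Gamma\Rightarrow\alpha$ and $\Gamma\Rightarrow\beta$ infer $\Gamma\Rightarrow\alpha\wedge\beta$; ($\wedge$l) from $\Gamma,\alpha,\beta\Rightarrow\varphi$ infer $\Gamma,\alpha\wedge\beta\Rightarrow\varphi$; ($\vee$r$_1$), ($\vee$r$_2$) from $\Gamma\Rightarrow\alpha$ (resp. $\Gamma\Rightarrow\beta$) infer $\Gamma\Rightarrow\alpha\vee\beta$; ($\vee$l) from $\Gamma,\alpha\Rightarrow\varphi$ and $\Gamma,\beta\Rightarrow\varphi$ infer $\Gamma,\alpha\vee\beta\Rightarrow\varphi$; (n) from $\Gamma,\neg\alpha,\beta\Rightarrow\alpha$ and $\Gamma,\neg\alpha,\alpha\Rightarrow\beta$ infer $\Gamma,\neg\alpha\Rightarrow\neg\beta$; (nef) from $\Gamma,\neg\alpha\Rightarrow\alpha$ infer $\Gamma,\neg\alpha\Rightarrow\neg\beta$; (copc) from $\Gamma,\neg\alpha,\beta\Rightarrow\alpha$ infer $\Gamma,\neg\alpha\Rightarrow\neg\beta$; (an) from $\Gamma,\alpha\Rightarrow\neg\alpha$ infer $\Gamma\Rightarrow\neg\alpha$. The rules (ax) through ($\vee$l) are the positive rules. The four systems are: $\mathbf{G3N}$ = positive rules + (n); $\mathbf{G3NeF}$ = positive rules + (n) + (nef); $\mathbf{G3CoPC}$ = positive rules + (copc); $\mathbf{G3MPC}$ = positive rules + (copc) + (an). None of them contains weakening, contraction or cut as a rule. A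 derivation is a finite tree of rule instances with leaves instances of (ax) or ($\top$); its height is the number of inference steps on a longest branch. A sequent is derivable if it has a derivation; a formula $\varphi$ is a theorem if $\Rightarrow\varphi$ (empty antecedent) is derivable. The common language of two multisets of formulas $\Gamma$ and $\Delta'$ is the set of propositional variables that occur both in some formula of $\Gamma$ and in some formula of $\Delta'$; here $\Delta'$ is $\Delta$ together with $\varphi$. *)

theory Defs
  imports Main "HOL-Library.Multiset"
begin

datatype fm = Var nat | Top | And fm fm | Or fm fm | Imp fm fm | Neg fm

fun vars :: "fm \<Rightarrow> nat set" where
  "vars (Var p) = {p}"
| "vars Top = {}"
| "vars (And a b) = vars a \<union> vars b"
| "vars (Or a b) = vars a \<union> vars b"
| "vars (Imp a b) = vars a \<union> vars b"
| "vars (Neg a) = vars a"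

definition mvars :: "fm multiset \<Rightarrow> nat set" where
  "mvars G = (\<Union>a\<in>set_mset G. vars a)"

definition common_lang :: "fm multiset \<Rightarrow> fm multiset \<Rightarrow> fm \<Rightarrow> nat set" where
  "common_lang G D phi = mvars G \<inter> mvars (add_mset phi D)"

datatype sys = G3N | G3NeF | G3CoPC | G3MPC

definition has_n :: "sys \<Rightarrow> bool" where "has_n S \<longleftrightarrow> S = G3N \<or> S = G3NeF"
definition has_nef :: "sys \<Rightarrow> bool" where "has_nef S \<longleftrightarrow> S = G3NeF"
definition has_copc :: "sys \<Rightarrow> bool" where "has_copc S \<longleftrightarrow> S = G3CoPC \<or> S = G3MPC"
definition has_an :: "sys \<Rightarrow> bool" where "has_an S \<longleftrightarrow> S = G3MPC"

inductive deriv :: "sys \<Rightarrow> fm multiset \<Rightarrow> fm \<Rightarrow> bool" for S where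
  ax: "deriv S (add_mset (Var p) G) (Var p)"
| top: "deriv S G Top"
| impR: "deriv S (add_mset a G) b \<Longrightarrow> deriv S G (Imp a b)"
| impL: "deriv S (add_mset (Imp a b) G) a \<Longrightarrow> deriv S (add_mset b G) phi
         \<Longrightarrow> deriv S (add_mset (Imp a b) G) phi"
| andR: "deriv S G a \<Longrightarrow> deriv S G b \<Longrightarrow> deriv S G (And a b)"
| andL: "deriv S (add_mset a (add_mset b G)) phi \<Longrightarrow> deriv S (add_mset (And a b) G) phi"
| orR1: "deriv S G a \<Longrightarrow> deriv S G (Or a b)"
| orR2: "deriv S G b \<Longrightarrow> deriv S G (Or a b)"
| orL: "deriv S (add_mset a G) phi \<Longrightarrow> deriv S (add_mset b G) phi
        \<Longrightarrow> deriv S (add_mset (Or a b) G) phi"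
| n: "has_n S \<Longrightarrow> deriv S (add_mset (Neg a) (add_mset b G)) a
      \<Longrightarrow> deriv S (add_mset (Neg a) (add_mset a G)) b
      \<Longrightarrow> deriv S (add_mset (Neg a) G) (Neg b)"
| nef: "has_nef S \<Longrightarrow> deriv S (add_mset (Neg a) G) a
      \<Longrightarrow> deriv S (add_mset (Neg a) G) (Neg b)"
| copc: "has_copc S \<Longrightarrow> deriv S (add_mset (Neg a) (add_mset b G)) a
      \<Longrightarrow> deriv S (add_mset (Neg a) G) (Neg b)"
| an: "has_an S \<Longrightarrow> deriv S (add_mset a G) (Neg a) \<Longrightarrow> deriv S G (Neg a)"

end

theory Submission
  imports Defs
begin

text \<open>Maehara's method. By induction on a derivation of \<open>\<Gamma>, \<Delta> \<Rightarrow> \<phi>\<close> one builds, for every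
  split of the antecedent, a formula \<open>\<sigma>\<close> in the common language with \<open>\<Gamma> \<Rightarrow> \<sigma>\<close> and
  \<open>\<sigma>, \<Delta> \<Rightarrow> \<phi>\<close>: each rule turns interpolants of its premises into one of its conclusion, the
  two sides exchanging their roles when a premise moves a side formula of a \<open>\<Gamma>\<close>-principal
  formula to the succedent. The one case that is not a mere recombination is rule (n) with
  principal formula \<open>\<not>x\<close> in \<open>\<Gamma>\<close>, whose construction needs a cut. Cut is therefore shown
  admissible first, by induction on the cut formula and on the derivation of the right premise,
  using that the left rules for \<open>\<and>\<close>, \<open>\<or>\<close>, \<open>\<rightarrow>\<close> are invertible.\<close>

section \<open>Structural rules\<close>

lemma deriv_weaken: "deriv S G C \<Longrightarrow> deriv S (G + H) C"
  by (induction rule: deriv.induct) (auto intro: deriv.intros)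

lemma deriv_weaken1: "deriv S G C \<Longrightarrow> deriv S (add_mset x G) C"
  using deriv_weaken[of S G C "{#x#}"] by simp

lemma deriv_weaken_subset: "deriv S G C \<Longrightarrow> G \<subseteq># H \<Longrightarrow> deriv S H C"
  by (metis deriv_weaken subset_mset.add_diff_inverse)

lemma has_n_iff_not_copc: "has_n S \<longleftrightarrow> \<not> has_copc S"
  by (cases S) (simp_all add: has_n_def has_copc_def)

lemma has_nef_imp_n: "has_nef S \<Longrightarrow> has_n S"
  by (cases S) (simp_all add: has_n_def has_nef_def)

lemma has_an_imp_copc: "has_an S \<Longrightarrow> has_copc S"
  by (cases S) (simp_all add: has_an_def has_copc_def)

lemma deriv_identity: "deriv S (add_mset A G) A"
proof (induction A arbitrary: G)
  case (Var p)
  show ?case by (rule deriv.ax)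
next
  case Top
  show ?case by (rule deriv.top)
next
  case (And A B)
  have "deriv S (add_mset A (add_mset B G)) A" "deriv S (add_mset A (add_mset B G)) B"
    using And.IH[of "add_mset B G"] And.IH(2)[of "add_mset A G"] by (simp_all add: add_mset_commute)
  then show ?case by (blast intro: deriv.andR deriv.andL)
next
  case (Or A B)
  show ?case using Or.IH by (blast intro: deriv.orL deriv.orR1 deriv.orR2)
next
  case (Imp A B)
  have "deriv S (add_mset (Imp A B) (add_mset A G)) A"
    using Imp.IH(1)[of "add_mset (Imp A B) G"] by (simp add: add_mset_commute)
  then have "deriv S (add_mset (Imp A B) (add_mset A G)) B"
    using Imp.IH(2) by (rule deriv.impL)
  then show ?case by (intro deriv.impR) (simp add: add_mset_commute)
next
  case (Neg A)
  have "deriv S (add_mset (Neg A) (add_mset A G)) A"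
    using Neg.IH[of "add_mset (Neg A) G"] by (simp add: add_mset_commute)
  then show ?case
    using has_n_iff_not_copc[of S] by (blast intro: deriv.n deriv.copc)
qed

section \<open>Invertible rules\<close>

lemma add_mset_eq_add_mset_cases:
  assumes "add_mset a M = add_mset b N"
  obtains "a = b" "M = N" | K where "M = add_mset b K" "N = add_mset a K"
  using assms by (auto simp: add_eq_conv_ex)

text \<open>\<open>P\<close> is an invariant of the context of \<open>A\<close>; for cut admissibility it says that this
  context still derives the cut formula \<open>A\<close>.\<close>

lemma deriv_replace_antecedent:
  assumes "deriv S M C" and "M = add_mset A K" and "P K"
    and P_weaken: "\<And>K x. P K \<Longrightarrow> P (add_mset x K)"
    and P_ImpL: "\<And>K x y. P (add_mset (Imp x y) K) \<Longrightarrow> P (add_mset y K)"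
    and P_AndL: "\<And>K x y. P (add_mset (And x y) K) \<Longrightarrow> P (add_mset x (add_mset y K))"
    and P_OrL: "\<And>K x y. P (add_mset (Or x y) K) \<Longrightarrow> P (add_mset x K) \<and> P (add_mset y K)"
    and principal_ax: "\<And>p K. A = Var p \<Longrightarrow> P K \<Longrightarrow> deriv S (R + K) (Var p)"
    and principal_impL: "\<And>x y K phi. A = Imp x y \<Longrightarrow> P K \<Longrightarrow> deriv S (R + K) x
      \<Longrightarrow> deriv S (add_mset y K) phi \<Longrightarrow> deriv S (R + K) phi"
    and principal_andL: "\<And>x y K phi. A = And x y \<Longrightarrow> P K
      \<Longrightarrow> deriv S (add_mset x (add_mset y K)) phi \<Longrightarrow> deriv S (R + K) phi"
    and principal_orL: "\<And>x y K phi. A = Or x y \<Longrightarrow> P K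
      \<Longrightarrow> deriv S (add_mset x K) phi \<Longrightarrow> deriv S (add_mset y K) phi \<Longrightarrow> deriv S (R + K) phi"
    and principal_n: "\<And>x y K. A = Neg x \<Longrightarrow> has_n S \<Longrightarrow> P K
      \<Longrightarrow> deriv S (R + add_mset y K) x \<Longrightarrow> deriv S (R + add_mset x K) y \<Longrightarrow> deriv S (R + K) (Neg y)"
    and principal_nef: "\<And>x y K. A = Neg x \<Longrightarrow> has_nef S \<Longrightarrow> P K
      \<Longrightarrow> deriv S (R + K) x \<Longrightarrow> deriv S (R + K) (Neg y)"
    and principal_copc: "\<And>x y K. A = Neg x \<Longrightarrow> has_copc S \<Longrightarrow> P K
      \<Longrightarrow> deriv S (R + add_mset y K) x \<Longrightarrow> deriv S (R + K) (Neg y)"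
  shows "deriv S (R + K) C"
  using assms(1-3)
proof (induction arbitrary: K rule: deriv.induct)
  case (ax p G)
  from ax.prems(1) show ?case
  proof (cases rule: add_mset_eq_add_mset_cases)
    case 1 with ax.prems(2) principal_ax show ?thesis by metis
  next
    case (2 K')
    then show ?thesis using deriv.ax[of S p "R + K'"] by simp
  qed
next
  case (top G)
  show ?case by (rule deriv.top)
next
  case (impR x G y)
  have "P (add_mset x K)" using impR.prems(2) by (rule P_weaken)
  then have "deriv S (add_mset x (R + K)) y"
    using impR.IH[of "add_mset x K"] impR.prems(1) by (simp add: add_mset_commute)
  then show ?case by (rule deriv.impR)
next
  case (impL x y G phi)
  have left: "deriv S (R + K) x" using impL.IH(1) impL.prems by blast
  from impL.prems(1) show ?case
  proof (cases rule: add_mset_eq_add_mset_cases)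
    case 1 with impL.prems(2) impL.hyps(2) left principal_impL show ?thesis by metis
  next
    case (2 K')
    have "P (add_mset y K')" using P_ImpL[of x y K'] impL.prems(2) 2 by simp
    then have "deriv S (add_mset y (R + K')) phi"
      using impL.IH(2)[of "add_mset y K'"] 2 by (simp add: add_mset_commute)
    moreover have "deriv S (add_mset (Imp x y) (R + K')) x" using left 2 by simp
    ultimately show ?thesis using 2 by (simp add: deriv.impL)
  qed
next
  case (andR G x y)
  then show ?case by (blast intro: deriv.andR)
next
  case (andL x y G phi)
  from andL.prems(1) show ?case
  proof (cases rule: add_mset_eq_add_mset_cases)
    case 1 with andL.prems(2) andL.hyps principal_andL show ?thesis by metis
  next
    case (2 K')
    have "P (add_mset x (add_mset y K'))" using P_AndL[of x y K'] andL.prems(2) 2 by simp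
    then have "deriv S (add_mset x (add_mset y (R + K'))) phi"
      using andL.IH[of "add_mset x (add_mset y K')"] 2 by (simp add: add_mset_commute)
    then show ?thesis using 2 by (simp add: deriv.andL)
  qed
next
  case (orR1 G x y)
  then show ?case by (blast intro: deriv.orR1)
next
  case (orR2 G y x)
  then show ?case by (blast intro: deriv.orR2)
next
  case (orL x G phi y)
  from orL.prems(1) show ?case
  proof (cases rule: add_mset_eq_add_mset_cases)
    case 1 with orL.prems(2) orL.hyps principal_orL show ?thesis by metis
  next
    case (2 K')
    have "P (add_mset x K')" "P (add_mset y K')" using P_OrL[of x y K'] orL.prems(2) 2 by simp_all
    then have "deriv S (add_mset x (R + K')) phi" "deriv S (add_mset y (R + K')) phi"
      using orL.IH[of "add_mset x K'"]
        orL.IH[of "add_mset y K'"] 2 by (simp_all add: add_mset_commute)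
    then show ?thesis using 2 by (simp add: deriv.orL)
  qed
next
  case (n x y G)
  from n.prems(1) show ?case
  proof (cases rule: add_mset_eq_add_mset_cases)
    case 1
    have "P (add_mset y K)" "P (add_mset x K)" using n.prems(2) by (simp_all add: P_weaken)
    with 1 n.prems(2) n.IH n.hyps(1) principal_n show ?thesis by metis
  next
    case (2 K')
    have "P (add_mset (Neg x) (add_mset z K'))" for z
      using P_weaken[OF n.prems(2), of z] 2 by (simp add: add_mset_commute)
    then have "deriv S (add_mset (Neg x) (add_mset y (R + K'))) x"
      "deriv S (add_mset (Neg x) (add_mset x (R + K'))) y"
      using n.IH(1)[of "add_mset (Neg x) (add_mset y K')"]
        n.IH(2)[of "add_mset (Neg x) (add_mset x K')"] 2
      by (simp_all add: add_mset_commute)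
    then show ?thesis using 2 n.hyps(1) by (simp add: deriv.n)
  qed
next
  case (nef x G y)
  from nef.prems(1) show ?case
  proof (cases rule: add_mset_eq_add_mset_cases)
    case 1 with nef.prems(2) nef.IH nef.hyps(1) principal_nef show ?thesis by metis
  next
    case (2 K')
    have "deriv S (add_mset (Neg x) (R + K')) x"
      using nef.IH nef.prems 2 by simp
    then show ?thesis using 2 nef.hyps(1) by (simp add: deriv.nef)
  qed
next
  case (copc x y G)
  from copc.prems(1) show ?case
  proof (cases rule: add_mset_eq_add_mset_cases)
    case 1
    have "P (add_mset y K)" using copc.prems(2) by (rule P_weaken)
    with 1 copc.prems(2) copc.IH copc.hyps(1) principal_copc show ?thesis by metis
  next
    case (2 K')
    have "P (add_mset (Neg x) (add_mset y K'))"
      using P_weaken[OF copc.prems(2), of y] 2 by (simp add: add_mset_commute)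
    then have "deriv S (add_mset (Neg x) (add_mset y (R + K'))) x"
      using copc.IH[of "add_mset (Neg x) (add_mset y K')"] 2 by (simp add: add_mset_commute)
    then show ?thesis using 2 copc.hyps(1) by (simp add: deriv.copc)
  qed
next
  case (an x G)
  have "P (add_mset x K)" using an.prems(2) by (rule P_weaken)
  then have "deriv S (add_mset x (R + K)) (Neg x)"
    using an.IH[of "add_mset x K"] an.prems(1) by (simp add: add_mset_commute)
  then show ?case by (rule deriv.an[OF an.hyps(1)])
qed

lemma deriv_ImpL_inv: "deriv S (add_mset (Imp a b) G) C \<Longrightarrow> deriv S (add_mset b G) C"
  using deriv_replace_antecedent[where A="Imp a b" and P="\<lambda>_. True" and R="{#b#}"] by simp

lemma deriv_AndL_inv: "deriv S (add_mset (And a b) G) C \<Longrightarrow> deriv S (add_mset a (add_mset b G)) C"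
  using deriv_replace_antecedent[where A="And a b" and P="\<lambda>_. True" and R="{#a, b#}"] by simp

lemma deriv_OrL_inv:
  assumes "deriv S (add_mset (Or a b) G) C"
  shows "deriv S (add_mset a G) C" and "deriv S (add_mset b G) C"
  using deriv_replace_antecedent[where A="Or a b" and P="\<lambda>_. True" and R="{#a#}"]
    deriv_replace_antecedent[where A="Or a b" and P="\<lambda>_. True" and R="{#b#}"] assms
  by simp_all

lemma deriv_AndR_inv: "deriv S M (And a b) \<Longrightarrow> deriv S M a \<and> deriv S M b"
proof (induction M "And a b" rule: deriv.induct)
  case (impL x y G)
  then show ?case by (blast intro: deriv.impL)
next
  case (andL x y G)
  then show ?case by (blast intro: deriv.andL)
next
  case (orL x G y)
  then show ?case by (blast intro: deriv.orL)
qed auto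

lemma deriv_ImpR_inv: "deriv S M (Imp a b) \<Longrightarrow> deriv S (add_mset a M) b"
proof (induction M "Imp a b" rule: deriv.induct)
  case (impL x y G)
  have "deriv S (add_mset (Imp x y) (add_mset a G)) x" "deriv S (add_mset y (add_mset a G)) b"
    using deriv_weaken1[OF impL.hyps(1), of a] impL by (simp_all add: add_mset_commute)
  then have "deriv S (add_mset (Imp x y) (add_mset a G)) b" by (rule deriv.impL)
  then show ?case by (simp add: add_mset_commute)
next
  case (andL x y G)
  then have "deriv S (add_mset x (add_mset y (add_mset a G))) b" by (simp add: add_mset_commute)
  from deriv.andL[OF this] show ?case by (simp add: add_mset_commute)
next
  case (orL x G y)
  then have "deriv S (add_mset x (add_mset a G)) b" "deriv S (add_mset y (add_mset a G)) b"
    by (simp_all add: add_mset_commute)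
  from deriv.orL[OF this] show ?case by (simp add: add_mset_commute)
qed auto

section \<open>Cut admissibility\<close>

definition cut_admissible :: "sys \<Rightarrow> fm \<Rightarrow> bool" where
  "cut_admissible S A \<longleftrightarrow> (\<forall>G C. deriv S G A \<longrightarrow> deriv S (add_mset A G) C \<longrightarrow> deriv S G C)"

lemma cut_admissibleD:
  "cut_admissible S A \<Longrightarrow> deriv S G A \<Longrightarrow> deriv S (add_mset A G) C \<Longrightarrow> deriv S G C"
  unfolding cut_admissible_def by blast

lemma cut_Imp:
  assumes "cut_admissible S a" and "cut_admissible S b"
    and "deriv S G (Imp a b)" and "deriv S G a" and "deriv S (add_mset b G) C"
  shows "deriv S G C"
proof -
  from \<open>deriv S G a\<close> deriv_ImpR_inv[OF \<open>deriv S G (Imp a b)\<close>]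
  have "deriv S G b" by (rule cut_admissibleD[OF assms(1)])
  from this \<open>deriv S (add_mset b G) C\<close> show ?thesis by (rule cut_admissibleD[OF assms(2)])
qed

lemma cut_And:
  assumes "cut_admissible S a" and "cut_admissible S b"
    and "deriv S G (And a b)" and "deriv S (add_mset a (add_mset b G)) C"
  shows "deriv S G C"
proof -
  have "deriv S G a" "deriv S G b" using deriv_AndR_inv[OF assms(3)] by simp_all
  from deriv_weaken1[OF \<open>deriv S G a\<close>] assms(4)
  have "deriv S (add_mset b G) C" by (rule cut_admissibleD[OF assms(1)])
  with \<open>deriv S G b\<close> show ?thesis by (rule cut_admissibleD[OF assms(2)])
qed

text \<open>Here and below the cut formula is principal in the right premise, and induction on the
  derivation of the left premise reaches the rule that introduced it.\<close>

lemma cut_Or: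
  assumes "cut_admissible S a" and "cut_admissible S b"
  shows "deriv S M (Or a b) \<Longrightarrow> deriv S (add_mset a M) C \<Longrightarrow> deriv S (add_mset b M) C
    \<Longrightarrow> deriv S M C"
proof (induction M "Or a b" rule: deriv.induct)
  case (orR1 G)
  then show ?case using cut_admissibleD[OF assms(1)] by blast
next
  case (orR2 G)
  then show ?case using cut_admissibleD[OF assms(2)] by blast
next
  case (impL x y G)
  have "deriv S (add_mset a (add_mset y G)) C" "deriv S (add_mset b (add_mset y G)) C"
    using impL.prems deriv_ImpL_inv[of S x y "add_mset a G" C]
      deriv_ImpL_inv[of S x y "add_mset b G" C]
    by (simp_all add: add_mset_commute)
  with impL show ?case by (blast intro: deriv.impL)
next
  case (andL x y G)
  have "deriv S (add_mset a (add_mset x (add_mset y G))) C"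
    "deriv S (add_mset b (add_mset x (add_mset y G))) C"
    using andL.prems deriv_AndL_inv[of S x y "add_mset a G" C]
      deriv_AndL_inv[of S x y "add_mset b G" C]
    by (simp_all add: add_mset_commute)
  with andL show ?case by (blast intro: deriv.andL)
next
  case (orL x G y)
  have "deriv S (add_mset a (add_mset x G)) C" "deriv S (add_mset b (add_mset x G)) C"
    "deriv S (add_mset a (add_mset y G)) C" "deriv S (add_mset b (add_mset y G)) C"
    using orL.prems deriv_OrL_inv[of S x y "add_mset a G" C]
      deriv_OrL_inv[of S x y "add_mset b G" C]
    by (simp_all add: add_mset_commute)
  with orL show ?case by (blast intro: deriv.orL)
qed

lemma cut_Neg_n:
  assumes "has_n S" and "cut_admissible S b"
  shows "deriv S M (Neg b) \<Longrightarrow> deriv S (add_mset d M) b \<Longrightarrow> deriv S (add_mset b M) d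
    \<Longrightarrow> deriv S M (Neg d)"
proof (induction M "Neg b" rule: deriv.induct)
  case (impL x y G)
  have "deriv S (add_mset d (add_mset y G)) b" "deriv S (add_mset b (add_mset y G)) d"
    using impL.prems deriv_ImpL_inv[of S x y "add_mset d G" b]
      deriv_ImpL_inv[of S x y "add_mset b G" d]
    by (simp_all add: add_mset_commute)
  with impL show ?case by (blast intro: deriv.impL)
next
  case (andL x y G)
  have "deriv S (add_mset d (add_mset x (add_mset y G))) b"
    "deriv S (add_mset b (add_mset x (add_mset y G))) d"
    using andL.prems deriv_AndL_inv[of S x y "add_mset d G" b]
      deriv_AndL_inv[of S x y "add_mset b G" d]
    by (simp_all add: add_mset_commute)
  with andL show ?case by (blast intro: deriv.andL)
next
  case (orL x G y)
  have "deriv S (add_mset d (add_mset x G)) b" "deriv S (add_mset b (add_mset x G)) d"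
    "deriv S (add_mset d (add_mset y G)) b" "deriv S (add_mset b (add_mset y G)) d"
    using orL.prems deriv_OrL_inv[of S x y "add_mset d G" b]
      deriv_OrL_inv[of S x y "add_mset b G" d]
    by (simp_all add: add_mset_commute)
  with orL show ?case by (blast intro: deriv.orL)
next
  case (n x G)
  have "deriv S (add_mset (Neg x) (add_mset d G)) b"
    "deriv S (add_mset b (add_mset (Neg x) (add_mset d G))) x"
    using n.prems(1) deriv_weaken1[OF n.hyps(2), of d] by (simp_all add: add_mset_commute)
  then have "deriv S (add_mset (Neg x) (add_mset d G)) x"
    by (rule cut_admissibleD[OF assms(2)])
  moreover have "deriv S (add_mset b (add_mset (Neg x) (add_mset x G))) d"
    using deriv_weaken1[OF n.prems(2), of x] by (simp add: add_mset_commute)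
  with n.hyps(4) have "deriv S (add_mset (Neg x) (add_mset x G)) d"
    by (rule cut_admissibleD[OF assms(2)])
  ultimately show ?case using assms(1) by (blast intro: deriv.n)
next
  case (nef x G)
  then show ?case by (blast intro: deriv.nef)
next
  case (copc x G)
  then show ?case using assms(1) has_n_iff_not_copc by blast
next
  case (an G)
  then show ?case using assms(1) has_n_iff_not_copc has_an_imp_copc by blast
qed

lemma cut_Neg_nef:
  assumes "has_nef S" and "cut_admissible S b"
  shows "deriv S M (Neg b) \<Longrightarrow> deriv S M b \<Longrightarrow> deriv S M (Neg d)"
proof (induction M "Neg b" rule: deriv.induct)
  case (impL x y G)
  have "deriv S (add_mset y G) b"
    using deriv_ImpL_inv[OF impL.prems] .
  with impL show ?case by (blast intro: deriv.impL)
next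
  case (andL x y G)
  have "deriv S (add_mset x (add_mset y G)) b"
    using deriv_AndL_inv[OF andL.prems] .
  with andL show ?case by (blast intro: deriv.andL)
next
  case (orL x G y)
  have "deriv S (add_mset x G) b" "deriv S (add_mset y G) b"
    using deriv_OrL_inv[OF orL.prems] .
  with orL show ?case by (blast intro: deriv.orL)
next
  case (n x G)
  have "deriv S (add_mset b (add_mset (Neg x) G)) x"
    using n.hyps(2) by (simp add: add_mset_commute)
  with n.prems have "deriv S (add_mset (Neg x) G) x"
    by (rule cut_admissibleD[OF assms(2)])
  with assms(1) show ?case by (rule deriv.nef)
next
  case (nef x G)
  then show ?case by (blast intro: deriv.nef)
next
  case (copc x G)
  then show ?case using assms(1) has_nef_imp_n has_n_iff_not_copc by blast
next
  case (an G)
  then show ?case using assms(1) has_nef_imp_n has_n_iff_not_copc has_an_imp_copc by blast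
qed

lemma cut_Neg_copc:
  assumes "has_copc S" and "cut_admissible S b"
  shows "deriv S M (Neg b) \<Longrightarrow> deriv S (add_mset d M) b \<Longrightarrow> deriv S M (Neg d)"
proof (induction M "Neg b" rule: deriv.induct)
  case (impL x y G)
  have "deriv S (add_mset d (add_mset y G)) b"
    using impL.prems deriv_ImpL_inv[of S x y "add_mset d G" b] by (simp add: add_mset_commute)
  with impL show ?case by (blast intro: deriv.impL)
next
  case (andL x y G)
  have "deriv S (add_mset d (add_mset x (add_mset y G))) b"
    using andL.prems deriv_AndL_inv[of S x y "add_mset d G" b] by (simp add: add_mset_commute)
  with andL show ?case by (blast intro: deriv.andL)
next
  case (orL x G y)
  have "deriv S (add_mset d (add_mset x G)) b" "deriv S (add_mset d (add_mset y G)) b"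
    using orL.prems deriv_OrL_inv[of S x y "add_mset d G" b] by (simp_all add: add_mset_commute)
  with orL show ?case by (blast intro: deriv.orL)
next
  case (n x G)
  then show ?case using assms(1) has_n_iff_not_copc by blast
next
  case (nef x G)
  then show ?case using assms(1) has_nef_imp_n has_n_iff_not_copc by blast
next
  case (copc x G)
  have "deriv S (add_mset b (add_mset (Neg x) (add_mset d G))) x"
    using deriv_weaken1[OF copc.hyps(2), of d] by (simp add: add_mset_commute)
  moreover have "deriv S (add_mset (Neg x) (add_mset d G)) b"
    using copc.prems by (simp add: add_mset_commute)
  ultimately have "deriv S (add_mset (Neg x) (add_mset d G)) x"
    using cut_admissibleD[OF assms(2)] by blast
  with assms(1) show ?case by (rule deriv.copc)
next
  case (an G)
  have "deriv S (add_mset d (add_mset b G)) b"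
    using deriv_weaken1[OF an.prems, of b] by (simp add: add_mset_commute)
  then have "deriv S (add_mset b (add_mset d G)) (Neg d)"
    using an.hyps(3) deriv_weaken1 by (metis add_mset_commute)
  with an.prems have "deriv S (add_mset d G) (Neg d)"
    by (rule cut_admissibleD[OF assms(2)])
  with an.hyps(1) show ?case by (rule deriv.an)
qed

lemma cut_admissible_if_smaller:
  assumes smaller: "\<And>B. size B < size A \<Longrightarrow> cut_admissible S B"
  shows "cut_admissible S A"
  unfolding cut_admissible_def
proof (intro allI impI)
  fix G C
  assume "deriv S G A" and "deriv S (add_mset A G) C"
  have "deriv S ({#} + G) C"
  proof (rule deriv_replace_antecedent[where R="{#}" and P="\<lambda>K. deriv S K A",
        OF \<open>deriv S (add_mset A G) C\<close> refl \<open>deriv S G A\<close>], unfold add_0)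
    show "deriv S (add_mset x K) A" if "deriv S K A" for K x
      using that by (rule deriv_weaken1)
    show "deriv S (add_mset y K) A" if "deriv S (add_mset (Imp x y) K) A" for K x y
      using that by (rule deriv_ImpL_inv)
    show "deriv S (add_mset x (add_mset y K)) A" if "deriv S (add_mset (And x y) K) A" for K x y
      using that by (rule deriv_AndL_inv)
    show "deriv S (add_mset x K) A \<and> deriv S (add_mset y K) A"
      if "deriv S (add_mset (Or x y) K) A" for K x y
      using deriv_OrL_inv[OF that] ..
    show "deriv S K (Var p)" if "A = Var p" "deriv S K A" for p K
      using that by simp
    show "deriv S K phi" if "A = Imp x y" "deriv S K A" "deriv S K x" "deriv S (add_mset y K) phi"
      for x y K phi
      using cut_Imp[of S x y K phi] smaller that by simp
    show "deriv S K phi" if "A = And x y" "deriv S K A" "deriv S (add_mset x (add_mset y K)) phi"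
      for x y K phi
      using cut_And[of S x y K phi] smaller that by simp
    show "deriv S K phi"
      if "A = Or x y" "deriv S K A" "deriv S (add_mset x K) phi" "deriv S (add_mset y K) phi"
      for x y K phi
      using cut_Or[of S x y K phi] smaller that by simp
    show "deriv S K (Neg y)" if "A = Neg x" "has_n S" "deriv S K A"
      "deriv S (add_mset y K) x" "deriv S (add_mset x K) y" for x y K
      using cut_Neg_n[of S x K y] smaller that by simp
    show "deriv S K (Neg y)" if "A = Neg x" "has_nef S" "deriv S K A" "deriv S K x" for x y K
      using cut_Neg_nef[of S x K y] smaller that by simp
    show "deriv S K (Neg y)" if "A = Neg x" "has_copc S" "deriv S K A"
      "deriv S (add_mset y K) x" for x y K
      using cut_Neg_copc[of S x K y] smaller that by simp
  qed
  then show "deriv S G C" by simp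
qed

lemma cut_admissible_all: "cut_admissible S A"
proof (induction A rule: measure_induct_rule[where f=size])
  case (less A)
  then show ?case by (rule cut_admissible_if_smaller)
qed

lemma deriv_cut: "deriv S G A \<Longrightarrow> deriv S (add_mset A G) C \<Longrightarrow> deriv S G C"
  by (rule cut_admissibleD[OF cut_admissible_all])

section \<open>Interpolation\<close>

lemma add_mset_eq_union_cases:
  assumes "add_mset a M = G + D"
  obtains (left) G' where "G = add_mset a G'" and "M = G' + D"
    | (right) D' where "D = add_mset a D'" and "M = G + D'"
proof (cases "a \<in># G")
  case True
  then obtain G' where "G = add_mset a G'" by (blast dest: multi_member_split)
  with assms show ?thesis using left by simp
next
  case False
  with assms have "a \<in># D" by (metis add_mset_add_single union_iff union_single_eq_member)
  then obtain D' where "D = add_mset a D'" by (blast dest: multi_member_split)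
  with assms show ?thesis using right by simp
qed

lemma mvars_add_mset [simp]: "mvars (add_mset a M) = vars a \<union> mvars M"
  by (simp add: mvars_def)

lemma mvars_union [simp]: "mvars (M + N) = mvars M \<union> mvars N"
  by (simp add: mvars_def)

definition interpolant :: "sys \<Rightarrow> fm multiset \<Rightarrow> fm multiset \<Rightarrow> fm \<Rightarrow> fm \<Rightarrow> bool" where
  "interpolant S G D phi sigma \<longleftrightarrow>
     vars sigma \<subseteq> common_lang G D phi \<and> deriv S G sigma \<and> deriv S (add_mset sigma D) phi"

definition interpolable :: "sys \<Rightarrow> fm multiset \<Rightarrow> fm \<Rightarrow> bool" where
  "interpolable S M phi \<longleftrightarrow> (\<forall>G D. M = G + D \<longrightarrow> (\<exists>sigma. interpolant S G D phi sigma))"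

lemma interpolableI:
  "(\<And>G D. M = G + D \<Longrightarrow> \<exists>sigma. interpolant S G D phi sigma) \<Longrightarrow> interpolable S M phi"
  unfolding interpolable_def by blast

lemma interpolableE:
  assumes "interpolable S M phi" and "M = G + D"
  obtains sigma where "vars sigma \<subseteq> common_lang G D phi" and "deriv S G sigma"
    and "deriv S (add_mset sigma D) phi"
  using assms unfolding interpolable_def interpolant_def by blast

lemma interpolable_ax: "interpolable S (add_mset (Var p) G) (Var p)"
proof (rule interpolableI)
  fix \<Gamma> \<Delta> assume "add_mset (Var p) G = \<Gamma> + \<Delta>"
  then show "\<exists>sigma. interpolant S \<Gamma> \<Delta> (Var p) sigma"
  proof (cases rule: add_mset_eq_union_cases)
    case (left \<Gamma>')
    then have "interpolant S \<Gamma> \<Delta> (Var p) (Var p)"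
      by (simp add: interpolant_def common_lang_def deriv.ax)
    then show ?thesis ..
  next
    case (right \<Delta>')
    have "deriv S (add_mset Top \<Delta>) (Var p)"
      using deriv.ax[of S p "add_mset Top \<Delta>'"] right by (simp add: add_mset_commute)
    then have "interpolant S \<Gamma> \<Delta> (Var p) Top"
      by (simp add: interpolant_def deriv.top)
    then show ?thesis ..
  qed
qed

lemma interpolable_Top: "interpolable S G Top"
  by (rule interpolableI, rule exI[of _ Top]) (simp add: interpolant_def deriv.top)

lemma interpolable_ImpR:
  assumes "interpolable S (add_mset a G) b"
  shows "interpolable S G (Imp a b)"
proof (rule interpolableI)
  fix \<Gamma> \<Delta> assume "G = \<Gamma> + \<Delta>"
  then have "add_mset a G = \<Gamma> + add_mset a \<Delta>" by simp
  then obtain s where "vars s \<subseteq> common_lang \<Gamma> (add_mset a \<Delta>) b" "deriv S \<Gamma> s"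
    "deriv S (add_mset s (add_mset a \<Delta>)) b"
    by (rule interpolableE[OF assms])
  then have "interpolant S \<Gamma> \<Delta> (Imp a b) s"
    by (auto simp: interpolant_def common_lang_def add_mset_commute intro: deriv.impR)
  then show "\<exists>sigma. interpolant S \<Gamma> \<Delta> (Imp a b) sigma" ..
qed

lemma interpolable_ImpL:
  assumes IH1: "interpolable S (add_mset (Imp x y) G) x"
    and IH2: "interpolable S (add_mset y G) phi"
  shows "interpolable S (add_mset (Imp x y) G) phi"
proof (rule interpolableI)
  fix \<Gamma> \<Delta> assume "add_mset (Imp x y) G = \<Gamma> + \<Delta>"
  then show "\<exists>sigma. interpolant S \<Gamma> \<Delta> phi sigma"
  proof (cases rule: add_mset_eq_union_cases)
    case (left \<Gamma>')
    have "add_mset (Imp x y) G = \<Delta> + \<Gamma>" using left by (simp add: union_commute)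
    then obtain s1 where s1: "vars s1 \<subseteq> common_lang \<Delta> \<Gamma> x" "deriv S \<Delta> s1"
      "deriv S (add_mset s1 \<Gamma>) x"
      by (rule interpolableE[OF IH1])
    have "add_mset y G = add_mset y \<Gamma>' + \<Delta>" using left by simp
    then obtain s2 where s2: "vars s2 \<subseteq> common_lang (add_mset y \<Gamma>') \<Delta> phi"
      "deriv S (add_mset y \<Gamma>') s2" "deriv S (add_mset s2 \<Delta>) phi"
      by (rule interpolableE[OF IH2])
    have "deriv S (add_mset (Imp x y) (add_mset s1 \<Gamma>')) s2"
    proof (rule deriv.impL)
      show "deriv S (add_mset (Imp x y) (add_mset s1 \<Gamma>')) x"
        using s1(3) left by (simp add: add_mset_commute)
      show "deriv S (add_mset y (add_mset s1 \<Gamma>')) s2"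
        by (rule deriv_weaken_subset[OF s2(2)]) simp
    qed
    then have "deriv S \<Gamma> (Imp s1 s2)"
      using left by (intro deriv.impR) (simp add: add_mset_commute)
    moreover have "deriv S (add_mset (Imp s1 s2) \<Delta>) phi"
      by (rule deriv.impL[OF deriv_weaken1[OF s1(2)] s2(3)])
    moreover have "vars (Imp s1 s2) \<subseteq> common_lang \<Gamma> \<Delta> phi"
      using s1(1) s2(1) left by (auto simp: common_lang_def)
    ultimately show ?thesis unfolding interpolant_def by blast
  next
    case (right \<Delta>')
    have "add_mset (Imp x y) G = \<Gamma> + \<Delta>" using right by simp
    then obtain s1 where s1: "vars s1 \<subseteq> common_lang \<Gamma> \<Delta> x" "deriv S \<Gamma> s1"
      "deriv S (add_mset s1 \<Delta>) x"
      by (rule interpolableE[OF IH1])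
    have "add_mset y G = \<Gamma> + add_mset y \<Delta>'" using right by simp
    then obtain s2 where s2: "vars s2 \<subseteq> common_lang \<Gamma> (add_mset y \<Delta>') phi"
      "deriv S \<Gamma> s2" "deriv S (add_mset s2 (add_mset y \<Delta>')) phi"
      by (rule interpolableE[OF IH2])
    have "deriv S (add_mset (Imp x y) (add_mset s1 (add_mset s2 \<Delta>'))) phi"
    proof (rule deriv.impL)
      show "deriv S (add_mset (Imp x y) (add_mset s1 (add_mset s2 \<Delta>'))) x"
        by (rule deriv_weaken_subset[OF s1(3)]) (simp add: right)
      show "deriv S (add_mset y (add_mset s1 (add_mset s2 \<Delta>'))) phi"
        by (rule deriv_weaken_subset[OF s2(3)]) simp
    qed
    then have "deriv S (add_mset (And s1 s2) \<Delta>) phi"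
      using right by (intro deriv.andL) (simp add: add_mset_commute)
    moreover have "deriv S \<Gamma> (And s1 s2)" using s1(2) s2(2) by (rule deriv.andR)
    moreover have "vars (And s1 s2) \<subseteq> common_lang \<Gamma> \<Delta> phi"
      using s1(1) s2(1) right by (auto simp: common_lang_def)
    ultimately show ?thesis unfolding interpolant_def by blast
  qed
qed

lemma interpolable_AndR:
  assumes IH1: "interpolable S G a" and IH2: "interpolable S G b"
  shows "interpolable S G (And a b)"
proof (rule interpolableI)
  fix \<Gamma> \<Delta> assume split: "G = \<Gamma> + \<Delta>"
  obtain s1 where s1: "vars s1 \<subseteq> common_lang \<Gamma> \<Delta> a" "deriv S \<Gamma> s1" "deriv S (add_mset s1 \<Delta>) a"
    using interpolableE[OF IH1 split] .
  obtain s2 where s2: "vars s2 \<subseteq> common_lang \<Gamma> \<Delta> b" "deriv S \<Gamma> s2" "deriv S (add_mset s2 \<Delta>) b"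
    using interpolableE[OF IH2 split] .
  have "deriv S (add_mset s1 (add_mset s2 \<Delta>)) a" "deriv S (add_mset s1 (add_mset s2 \<Delta>)) b"
    by (rule deriv_weaken_subset[OF s1(3)], simp, rule deriv_weaken_subset[OF s2(3)], simp)
  then have "deriv S (add_mset (And s1 s2) \<Delta>) (And a b)"
    by (intro deriv.andL deriv.andR)
  moreover have "deriv S \<Gamma> (And s1 s2)" using s1(2) s2(2) by (rule deriv.andR)
  moreover have "vars (And s1 s2) \<subseteq> common_lang \<Gamma> \<Delta> (And a b)"
    using s1(1) s2(1) by (auto simp: common_lang_def)
  ultimately show "\<exists>sigma. interpolant S \<Gamma> \<Delta> (And a b) sigma" unfolding interpolant_def by blast
qed

lemma interpolable_AndL:
  assumes IH: "interpolable S (add_mset x (add_mset y G)) phi"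
  shows "interpolable S (add_mset (And x y) G) phi"
proof (rule interpolableI)
  fix \<Gamma> \<Delta> assume "add_mset (And x y) G = \<Gamma> + \<Delta>"
  then show "\<exists>sigma. interpolant S \<Gamma> \<Delta> phi sigma"
  proof (cases rule: add_mset_eq_union_cases)
    case (left \<Gamma>')
    have "add_mset x (add_mset y G) = add_mset x (add_mset y \<Gamma>') + \<Delta>" using left by simp
    then obtain s where s: "vars s \<subseteq> common_lang (add_mset x (add_mset y \<Gamma>')) \<Delta> phi"
      "deriv S (add_mset x (add_mset y \<Gamma>')) s" "deriv S (add_mset s \<Delta>) phi"
      by (rule interpolableE[OF IH])
    have "deriv S \<Gamma> s" using deriv.andL[OF s(2)] left by simp
    moreover have "vars s \<subseteq> common_lang \<Gamma> \<Delta> phi"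
      using s(1) left by (auto simp: common_lang_def)
    ultimately show ?thesis using s(3) unfolding interpolant_def by blast
  next
    case (right \<Delta>')
    have "add_mset x (add_mset y G) = \<Gamma> + add_mset x (add_mset y \<Delta>')" using right by simp
    then obtain s where s: "vars s \<subseteq> common_lang \<Gamma> (add_mset x (add_mset y \<Delta>')) phi"
      "deriv S \<Gamma> s" "deriv S (add_mset s (add_mset x (add_mset y \<Delta>'))) phi"
      by (rule interpolableE[OF IH])
    have "deriv S (add_mset (And x y) (add_mset s \<Delta>')) phi"
      using s(3) by (intro deriv.andL) (simp add: add_mset_commute)
    then have "deriv S (add_mset s \<Delta>) phi" using right by (simp add: add_mset_commute)
    moreover have "vars s \<subseteq> common_lang \<Gamma> \<Delta> phi"
      using s(1) right by (auto simp: common_lang_def)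
    ultimately show ?thesis using s(2) unfolding interpolant_def by blast
  qed
qed

lemma interpolable_OrR1:
  assumes IH: "interpolable S G a"
  shows "interpolable S G (Or a b)"
proof (rule interpolableI)
  fix \<Gamma> \<Delta> assume "G = \<Gamma> + \<Delta>"
  then obtain s where "vars s \<subseteq> common_lang \<Gamma> \<Delta> a" "deriv S \<Gamma> s" "deriv S (add_mset s \<Delta>) a"
    by (rule interpolableE[OF IH])
  then have "interpolant S \<Gamma> \<Delta> (Or a b) s"
    by (auto simp: interpolant_def common_lang_def intro: deriv.orR1)
  then show "\<exists>sigma. interpolant S \<Gamma> \<Delta> (Or a b) sigma" ..
qed

lemma interpolable_OrR2:
  assumes IH: "interpolable S G b"
  shows "interpolable S G (Or a b)"
proof (rule interpolableI)
  fix \<Gamma> \<Delta> assume "G = \<Gamma> + \<Delta>"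
  then obtain s where "vars s \<subseteq> common_lang \<Gamma> \<Delta> b" "deriv S \<Gamma> s" "deriv S (add_mset s \<Delta>) b"
    by (rule interpolableE[OF IH])
  then have "interpolant S \<Gamma> \<Delta> (Or a b) s"
    by (auto simp: interpolant_def common_lang_def intro: deriv.orR2)
  then show "\<exists>sigma. interpolant S \<Gamma> \<Delta> (Or a b) sigma" ..
qed

lemma interpolable_OrL:
  assumes IH1: "interpolable S (add_mset x G) phi" and IH2: "interpolable S (add_mset y G) phi"
  shows "interpolable S (add_mset (Or x y) G) phi"
proof (rule interpolableI)
  fix \<Gamma> \<Delta> assume "add_mset (Or x y) G = \<Gamma> + \<Delta>"
  then show "\<exists>sigma. interpolant S \<Gamma> \<Delta> phi sigma"
  proof (cases rule: add_mset_eq_union_cases)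
    case (left \<Gamma>')
    have "add_mset x G = add_mset x \<Gamma>' + \<Delta>" using left by simp
    then obtain s1 where s1: "vars s1 \<subseteq> common_lang (add_mset x \<Gamma>') \<Delta> phi"
      "deriv S (add_mset x \<Gamma>') s1" "deriv S (add_mset s1 \<Delta>) phi"
      by (rule interpolableE[OF IH1])
    have "add_mset y G = add_mset y \<Gamma>' + \<Delta>" using left by simp
    then obtain s2 where s2: "vars s2 \<subseteq> common_lang (add_mset y \<Gamma>') \<Delta> phi"
      "deriv S (add_mset y \<Gamma>') s2" "deriv S (add_mset s2 \<Delta>) phi"
      by (rule interpolableE[OF IH2])
    have "deriv S \<Gamma> (Or s1 s2)"
      using deriv.orL[OF deriv.orR1[OF s1(2)] deriv.orR2[OF s2(2)]] left by simp
    moreover have "deriv S (add_mset (Or s1 s2) \<Delta>) phi" by (rule deriv.orL[OF s1(3) s2(3)])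
    moreover have "vars (Or s1 s2) \<subseteq> common_lang \<Gamma> \<Delta> phi"
      using s1(1) s2(1) left by (auto simp: common_lang_def)
    ultimately show ?thesis unfolding interpolant_def by blast
  next
    case (right \<Delta>')
    have "add_mset x G = \<Gamma> + add_mset x \<Delta>'" using right by simp
    then obtain s1 where s1: "vars s1 \<subseteq> common_lang \<Gamma> (add_mset x \<Delta>') phi"
      "deriv S \<Gamma> s1" "deriv S (add_mset s1 (add_mset x \<Delta>')) phi"
      by (rule interpolableE[OF IH1])
    have "add_mset y G = \<Gamma> + add_mset y \<Delta>'" using right by simp
    then obtain s2 where s2: "vars s2 \<subseteq> common_lang \<Gamma> (add_mset y \<Delta>') phi"
      "deriv S \<Gamma> s2" "deriv S (add_mset s2 (add_mset y \<Delta>')) phi"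
      by (rule interpolableE[OF IH2])
    have "deriv S (add_mset (Or x y) (add_mset s1 (add_mset s2 \<Delta>'))) phi"
    proof (rule deriv.orL)
      show "deriv S (add_mset x (add_mset s1 (add_mset s2 \<Delta>'))) phi"
        by (rule deriv_weaken_subset[OF s1(3)]) simp
      show "deriv S (add_mset y (add_mset s1 (add_mset s2 \<Delta>'))) phi"
        by (rule deriv_weaken_subset[OF s2(3)]) simp
    qed
    then have "deriv S (add_mset (And s1 s2) \<Delta>) phi"
      using right by (intro deriv.andL) (simp add: add_mset_commute)
    moreover have "deriv S \<Gamma> (And s1 s2)" using s1(2) s2(2) by (rule deriv.andR)
    moreover have "vars (And s1 s2) \<subseteq> common_lang \<Gamma> \<Delta> phi"
      using s1(1) s2(1) right by (auto simp: common_lang_def)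
    ultimately show ?thesis unfolding interpolant_def by blast
  qed
qed

lemma interpolable_copc:
  assumes "has_copc S" and IH: "interpolable S (add_mset (Neg x) (add_mset y G)) x"
  shows "interpolable S (add_mset (Neg x) G) (Neg y)"
proof (rule interpolableI)
  fix \<Gamma> \<Delta> assume "add_mset (Neg x) G = \<Gamma> + \<Delta>"
  then show "\<exists>sigma. interpolant S \<Gamma> \<Delta> (Neg y) sigma"
  proof (cases rule: add_mset_eq_union_cases)
    case (left \<Gamma>')
    have "add_mset (Neg x) (add_mset y G) = add_mset y \<Delta> + \<Gamma>" using left by simp
    then obtain s where s: "vars s \<subseteq> common_lang (add_mset y \<Delta>) \<Gamma> x"
      "deriv S (add_mset y \<Delta>) s" "deriv S (add_mset s \<Gamma>) x"
      by (rule interpolableE[OF IH])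
    have "deriv S (add_mset (Neg x) (add_mset s \<Gamma>')) x"
      using s(3) left by (simp add: add_mset_commute)
    then have "deriv S (add_mset (Neg x) \<Gamma>') (Neg s)" by (rule deriv.copc[OF assms(1)])
    then have "deriv S \<Gamma> (Neg s)" using left by simp
    moreover have "deriv S (add_mset (Neg s) (add_mset y \<Delta>)) s" using s(2) by (rule deriv_weaken1)
    then have "deriv S (add_mset (Neg s) \<Delta>) (Neg y)" by (rule deriv.copc[OF assms(1)])
    moreover have "vars (Neg s) \<subseteq> common_lang \<Gamma> \<Delta> (Neg y)"
      using s(1) left by (auto simp: common_lang_def)
    ultimately show ?thesis unfolding interpolant_def by blast
  next
    case (right \<Delta>')
    have "add_mset (Neg x) (add_mset y G) = \<Gamma> + add_mset (Neg x) (add_mset y \<Delta>')"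
      using right by simp
    then obtain s where s: "vars s \<subseteq> common_lang \<Gamma> (add_mset (Neg x) (add_mset y \<Delta>')) x"
      "deriv S \<Gamma> s" "deriv S (add_mset s (add_mset (Neg x) (add_mset y \<Delta>'))) x"
      by (rule interpolableE[OF IH])
    have "deriv S (add_mset (Neg x) (add_mset y (add_mset s \<Delta>'))) x"
      using s(3) by (simp add: add_mset_commute)
    then have "deriv S (add_mset (Neg x) (add_mset s \<Delta>')) (Neg y)" by (rule deriv.copc[OF assms(1)])
    then have "deriv S (add_mset s \<Delta>) (Neg y)" using right by (simp add: add_mset_commute)
    moreover have "vars s \<subseteq> common_lang \<Gamma> \<Delta> (Neg y)"
      using s(1) right by (auto simp: common_lang_def)
    ultimately show ?thesis using s(2) unfolding interpolant_def by blast
  qed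
qed

lemma interpolable_nef:
  assumes "has_nef S" and IH: "interpolable S (add_mset (Neg x) G) x"
  shows "interpolable S (add_mset (Neg x) G) (Neg y)"
proof (rule interpolableI)
  fix \<Gamma> \<Delta> assume split: "add_mset (Neg x) G = \<Gamma> + \<Delta>"
  then show "\<exists>sigma. interpolant S \<Gamma> \<Delta> (Neg y) sigma"
  proof (cases rule: add_mset_eq_union_cases)
    case (left \<Gamma>')
    have "add_mset (Neg x) G = \<Delta> + \<Gamma>" using split by (simp add: union_commute)
    then obtain s where s: "vars s \<subseteq> common_lang \<Delta> \<Gamma> x" "deriv S \<Delta> s" "deriv S (add_mset s \<Gamma>) x"
      by (rule interpolableE[OF IH])
    have "deriv S (add_mset (Neg x) (add_mset s \<Gamma>')) x"
      using s(3) left by (simp add: add_mset_commute)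
    then have "deriv S (add_mset (Neg x) (add_mset s \<Gamma>')) (Neg Top)"
      by (rule deriv.nef[OF assms(1)])
    then have "deriv S (add_mset s \<Gamma>) (Neg Top)" using left by (simp add: add_mset_commute)
    then have "deriv S \<Gamma> (Imp s (Neg Top))" by (rule deriv.impR)
    moreover have "deriv S (add_mset (Neg Top) \<Delta>) (Neg y)"
      by (rule deriv.nef[OF assms(1) deriv.top])
    then have "deriv S (add_mset (Imp s (Neg Top)) \<Delta>) (Neg y)"
      by (rule deriv.impL[OF deriv_weaken1[OF s(2)]])
    moreover have "vars (Imp s (Neg Top)) \<subseteq> common_lang \<Gamma> \<Delta> (Neg y)"
      using s(1) left by (auto simp: common_lang_def)
    ultimately show ?thesis unfolding interpolant_def by blast
  next
    case (right \<Delta>')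
    obtain s where s: "vars s \<subseteq> common_lang \<Gamma> \<Delta> x" "deriv S \<Gamma> s" "deriv S (add_mset s \<Delta>) x"
      by (rule interpolableE[OF IH split])
    have "deriv S (add_mset (Neg x) (add_mset s \<Delta>')) x"
      using s(3) right by (simp add: add_mset_commute)
    then have "deriv S (add_mset (Neg x) (add_mset s \<Delta>')) (Neg y)" by (rule deriv.nef[OF assms(1)])
    then have "deriv S (add_mset s \<Delta>) (Neg y)" using right by (simp add: add_mset_commute)
    moreover have "vars s \<subseteq> common_lang \<Gamma> \<Delta> (Neg y)"
      using s(1) right by (auto simp: common_lang_def)
    ultimately show ?thesis using s(2) unfolding interpolant_def by blast
  qed
qed

lemma interpolable_an:
  assumes "has_an S" and IH: "interpolable S (add_mset a G) (Neg a)"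
  shows "interpolable S G (Neg a)"
proof (rule interpolableI)
  fix \<Gamma> \<Delta> assume "G = \<Gamma> + \<Delta>"
  then have "add_mset a G = \<Gamma> + add_mset a \<Delta>" by simp
  then obtain s where s: "vars s \<subseteq> common_lang \<Gamma> (add_mset a \<Delta>) (Neg a)" "deriv S \<Gamma> s"
    "deriv S (add_mset s (add_mset a \<Delta>)) (Neg a)"
    by (rule interpolableE[OF IH])
  have "deriv S (add_mset a (add_mset s \<Delta>)) (Neg a)" using s(3) by (simp add: add_mset_commute)
  then have "deriv S (add_mset s \<Delta>) (Neg a)" by (rule deriv.an[OF assms(1)])
  moreover have "vars s \<subseteq> common_lang \<Gamma> \<Delta> (Neg a)"
    using s(1) by (auto simp: common_lang_def)
  ultimately show "\<exists>sigma. interpolant S \<Gamma> \<Delta> (Neg a) sigma"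
    using s(2) unfolding interpolant_def by blast
qed

text \<open>Rule (n) with principal formula \<open>\<not>x\<close> in \<open>\<Gamma>\<close>: here \<open>s1\<close> interpolates the first premise
  with \<open>\<Gamma>\<close> and \<open>\<Delta>\<close> exchanged and \<open>s2\<close> the second one. The interpolant hands \<open>s1 \<rightarrow> s2\<close> and
  \<open>(s2 \<rightarrow> s1) \<rightarrow> \<not>s1\<close> to \<open>\<Delta>\<close>, which then reapplies (n) with principal formula \<open>\<not>s1\<close>.\<close>

lemma deriv_n_interpolant_left:
  assumes "has_n S"
    and s1: "deriv S (add_mset s1 (add_mset (Neg x) G)) x"
    and s2: "deriv S (add_mset x (add_mset (Neg x) G)) s2"
  shows "deriv S (add_mset (Neg x) G) (And (Imp s1 s2) (Imp (Imp s2 s1) (Neg s1)))"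
proof (rule deriv.andR)
  have "deriv S (add_mset x (add_mset s1 (add_mset (Neg x) G))) s2"
    by (rule deriv_weaken_subset[OF s2]) simp
  with s1 have "deriv S (add_mset s1 (add_mset (Neg x) G)) s2" by (rule deriv_cut)
  then show "deriv S (add_mset (Neg x) G) (Imp s1 s2)" by (rule deriv.impR)
  have "deriv S (add_mset (Neg x) (add_mset s1 (add_mset (Imp s2 s1) G))) x"
    by (rule deriv_weaken_subset[OF s1]) simp
  moreover have "deriv S (add_mset (Neg x) (add_mset x (add_mset (Imp s2 s1) G))) s1"
  proof -
    have "deriv S (add_mset (Imp s2 s1) (add_mset (Neg x) (add_mset x G))) s2"
      by (rule deriv_weaken_subset[OF s2]) simp
    from deriv.impL[OF this deriv_identity] show ?thesis by (simp add: add_mset_commute)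
  qed
  ultimately have "deriv S (add_mset (Neg x) (add_mset (Imp s2 s1) G)) (Neg s1)"
    by (rule deriv.n[OF assms(1)])
  then show "deriv S (add_mset (Neg x) G) (Imp (Imp s2 s1) (Neg s1))"
    by (intro deriv.impR) (simp add: add_mset_commute)
qed

lemma deriv_n_interpolant_right:
  assumes "has_n S"
    and s1: "deriv S (add_mset y D) s1"
    and s2: "deriv S (add_mset s2 D) y"
  shows "deriv S (add_mset (And (Imp s1 s2) (Imp (Imp s2 s1) (Neg s1))) D) (Neg y)"
proof -
  have "deriv S (add_mset y (add_mset s2 D)) s1" by (rule deriv_weaken_subset[OF s1]) simp
  with s2 have "deriv S (add_mset s2 D) s1" by (rule deriv_cut)
  then have "deriv S (add_mset s2 (add_mset (Imp (Imp s2 s1) (Neg s1)) (add_mset (Imp s1 s2) D))) s1"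
    by (rule deriv_weaken_subset) simp
  then have "deriv S (add_mset (Imp (Imp s2 s1) (Neg s1)) (add_mset (Imp s1 s2) D)) (Imp s2 s1)"
    by (rule deriv.impR)
  moreover have "deriv S (add_mset (Neg s1) (add_mset (Imp s1 s2) D)) (Neg y)"
  proof (rule deriv.n[OF assms(1)])
    show "deriv S (add_mset (Neg s1) (add_mset y (add_mset (Imp s1 s2) D))) s1"
      by (rule deriv_weaken_subset[OF s1]) simp
    have "deriv S (add_mset (Imp s1 s2) (add_mset s1 (add_mset (Neg s1) D))) s1"
      using deriv_identity[of S s1 "add_mset (Imp s1 s2) (add_mset (Neg s1) D)"]
      by (simp add: add_mset_commute)
    moreover have "deriv S (add_mset s2 (add_mset s1 (add_mset (Neg s1) D))) y"
      by (rule deriv_weaken_subset[OF s2]) simp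
    ultimately have "deriv S (add_mset (Imp s1 s2) (add_mset s1 (add_mset (Neg s1) D))) y"
      by (rule deriv.impL)
    then show "deriv S (add_mset (Neg s1) (add_mset s1 (add_mset (Imp s1 s2) D))) y"
      by (simp add: add_mset_commute)
  qed
  ultimately have "deriv S (add_mset (Imp (Imp s2 s1) (Neg s1)) (add_mset (Imp s1 s2) D)) (Neg y)"
    by (rule deriv.impL)
  then show ?thesis by (intro deriv.andL) (simp add: add_mset_commute)
qed

lemma interpolable_n:
  assumes "has_n S"
    and IH1: "interpolable S (add_mset (Neg x) (add_mset y G)) x"
    and IH2: "interpolable S (add_mset (Neg x) (add_mset x G)) y"
  shows "interpolable S (add_mset (Neg x) G) (Neg y)"
proof (rule interpolableI)
  fix \<Gamma> \<Delta> assume "add_mset (Neg x) G = \<Gamma> + \<Delta>"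
  then show "\<exists>sigma. interpolant S \<Gamma> \<Delta> (Neg y) sigma"
  proof (cases rule: add_mset_eq_union_cases)
    case (left \<Gamma>')
    have "add_mset (Neg x) (add_mset y G) = add_mset y \<Delta> + \<Gamma>" using left by simp
    then obtain s1 where s1: "vars s1 \<subseteq> common_lang (add_mset y \<Delta>) \<Gamma> x"
      "deriv S (add_mset y \<Delta>) s1" "deriv S (add_mset s1 \<Gamma>) x"
      by (rule interpolableE[OF IH1])
    have "add_mset (Neg x) (add_mset x G) = add_mset x \<Gamma> + \<Delta>" using left by simp
    then obtain s2 where s2: "vars s2 \<subseteq> common_lang (add_mset x \<Gamma>) \<Delta> y"
      "deriv S (add_mset x \<Gamma>) s2" "deriv S (add_mset s2 \<Delta>) y"
      by (rule interpolableE[OF IH2])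
    have "deriv S \<Gamma> (And (Imp s1 s2) (Imp (Imp s2 s1) (Neg s1)))"
      using deriv_n_interpolant_left[OF assms(1)] s1(3) s2(2) left by simp
    moreover have "deriv S (add_mset (And (Imp s1 s2) (Imp (Imp s2 s1) (Neg s1))) \<Delta>) (Neg y)"
      using deriv_n_interpolant_right[OF assms(1) s1(2) s2(3)] .
    moreover have "vars (And (Imp s1 s2) (Imp (Imp s2 s1) (Neg s1))) \<subseteq> common_lang \<Gamma> \<Delta> (Neg y)"
      using s1(1) s2(1) left by (auto simp: common_lang_def)
    ultimately show ?thesis unfolding interpolant_def by blast
  next
    case (right \<Delta>')
    have "add_mset (Neg x) (add_mset y G) = \<Gamma> + add_mset (Neg x) (add_mset y \<Delta>')"
      using right by simp
    then obtain s1 where s1: "vars s1 \<subseteq> common_lang \<Gamma> (add_mset (Neg x) (add_mset y \<Delta>')) x"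
      "deriv S \<Gamma> s1" "deriv S (add_mset s1 (add_mset (Neg x) (add_mset y \<Delta>'))) x"
      by (rule interpolableE[OF IH1])
    have "add_mset (Neg x) (add_mset x G) = \<Gamma> + add_mset (Neg x) (add_mset x \<Delta>')"
      using right by simp
    then obtain s2 where s2: "vars s2 \<subseteq> common_lang \<Gamma> (add_mset (Neg x) (add_mset x \<Delta>')) y"
      "deriv S \<Gamma> s2" "deriv S (add_mset s2 (add_mset (Neg x) (add_mset x \<Delta>'))) y"
      by (rule interpolableE[OF IH2])
    have "deriv S (add_mset (Neg x) (add_mset s1 (add_mset s2 \<Delta>'))) (Neg y)"
    proof (rule deriv.n[OF assms(1)])
      show "deriv S (add_mset (Neg x) (add_mset y (add_mset s1 (add_mset s2 \<Delta>')))) x"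
        by (rule deriv_weaken_subset[OF s1(3)]) simp
      show "deriv S (add_mset (Neg x) (add_mset x (add_mset s1 (add_mset s2 \<Delta>')))) y"
        by (rule deriv_weaken_subset[OF s2(3)]) simp
    qed
    then have "deriv S (add_mset (And s1 s2) \<Delta>) (Neg y)"
      using right by (intro deriv.andL) (simp add: add_mset_commute)
    moreover have "deriv S \<Gamma> (And s1 s2)" using s1(2) s2(2) by (rule deriv.andR)
    moreover have "vars (And s1 s2) \<subseteq> common_lang \<Gamma> \<Delta> (Neg y)"
      using s1(1) s2(1) right by (auto simp: common_lang_def)
    ultimately show ?thesis unfolding interpolant_def by blast
  qed
qed

lemma deriv_interpolable: "deriv S M phi \<Longrightarrow> interpolable S M phi"
proof (induction rule: deriv.induct)
  case (ax p G)
  show ?case by (rule interpolable_ax)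
next
  case (top G)
  show ?case by (rule interpolable_Top)
next
  case (impR a G b)
  from impR.IH show ?case by (rule interpolable_ImpR)
next
  case (impL a b G phi)
  from impL.IH show ?case by (rule interpolable_ImpL)
next
  case (andR G a b)
  from andR.IH show ?case by (rule interpolable_AndR)
next
  case (andL a b G phi)
  from andL.IH show ?case by (rule interpolable_AndL)
next
  case (orR1 G a b)
  from orR1.IH show ?case by (rule interpolable_OrR1)
next
  case (orR2 G b a)
  from orR2.IH show ?case by (rule interpolable_OrR2)
next
  case (orL a G phi b)
  from orL.IH show ?case by (rule interpolable_OrL)
next
  case (n a b G)
  from n.hyps(1) n.IH show ?case by (rule interpolable_n)
next
  case (nef a G b)
  from nef.hyps(1) nef.IH show ?case by (rule interpolable_nef)
next
  case (copc a b G)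
  from copc.hyps(1) copc.IH show ?case by (rule interpolable_copc)
next
  case (an a G)
  from an.hyps(1) an.IH show ?case by (rule interpolable_an)
qed

theorem theorem4p3:
  fixes S :: sys and G D :: "fm multiset" and phi :: fm
  assumes "common_lang G D phi \<noteq> {}"
    and "deriv S (G + D) phi"
  shows "\<exists>sigma. vars sigma \<subseteq> common_lang G D phi
           \<and> deriv S G sigma \<and> deriv S (add_mset sigma D) phi"
  using deriv_interpolable[OF assms(2)] unfolding interpolable_def interpolant_def by blast

end
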